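(* Let $s\in\{0,\tfrac12\}$, $\lambda\in\mathbb{C}$, and let $\sigma\in\mathrm{Aut}(\mathfrak{L}^s_\lambda)$ be normalized, i.e. there are $\epsilon\in\{1,-1\}$, $\alpha,\mu\in\mathbb{C}\setminus\{0\}$, $\beta\in\mathbb{C}$ with $\sigma(L_m)=\epsilon\alpha^mL_{\epsilon m}+m\alpha^m\beta I_{\epsilon m}$ and $\sigma(I_m)=\alpha^m\mu I_{\epsilon m}$ for all $m\in\mathbb{Z}$. Then for every $p\in s+\mathbb{Z}$, $\sigma(G_p)\in\mathbb{C}G_{\epsilon p}+\mathrm{span}_{\mathbb{C}}\{H_q:q\in s+\mathbb{Z}\}$.
   Context: For $s\in\{0,\tfrac12\}$ and $\lambda\in\mathbb{C}$, $\mathfrak{L}^s_\lambda$ is the complex Lie superalgebra with basis $\{L_m,I_m,G_p,H_p : m\in\mathbb{Z},\ p\in s+\mathbb{Z}\}$, even part spanned by the $L_m,I_m$, odd part spanned by the $G_p,H_p$, with brackets $[L_m,L_n]=(m-n)L_{m+n}$, $[L_m,I_n]=(m-n)I_{m+n}$, $[L_m,H_p]=(\tfrac m2-p)H_{m+p}$, $[L_m,G_p]=(\tfrac m2-p)G_{m+p}+\lambda(m+1)H_{m+p}$, $[I_m,G_p]=(m-2p)H_{m+p}$, $[G_p,G_q]=I_{p+q}$, plus super-antisymmetry; all other brackets of basis elements are zero. $\mathrm{Aut}(\mathfrak{L})$ is the group of bijective parity-preserving linear maps $\sigma$ with $\sigma([x,y])=[\sigma(x),\sigma(y)]$. *)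

theory Defs
  imports Complex_Main "HOL-Library.Function_Algebras"
begin

text \<open>Basis of the Lie superalgebra.  Odd basis elements are indexed by
  twice their (half-)integer index: G n stands for G_p with p = n/2,
  likewise H n stands for H_p with p = n/2.\<close>
datatype sb = L int | I int | G int | H int

type_synonym vec = "sb \<Rightarrow> complex"

definition bas :: "sb \<Rightarrow> vec" where
  "bas b = (\<lambda>c. if c = b then 1 else 0)"

definition scal :: "complex \<Rightarrow> vec \<Rightarrow> vec" where
  "scal c v = (\<lambda>b. c * v b)"

definition supp :: "vec \<Rightarrow> sb set" where
  "supp v = {b. v b \<noteq> 0}"

definition halfidx :: "real \<Rightarrow> int \<Rightarrow> bool" where
  "halfidx s n \<longleftrightarrow> (\<exists>k::int. real_of_int n / 2 = s + real_of_int k)"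

fun adm :: "real \<Rightarrow> sb \<Rightarrow> bool" where
  "adm s (L m) = True"
| "adm s (I m) = True"
| "adm s (G n) = halfidx s n"
| "adm s (H n) = halfidx s n"

fun is_even :: "sb \<Rightarrow> bool" where
  "is_even (L m) = True"
| "is_even (I m) = True"
| "is_even (G n) = False"
| "is_even (H n) = False"

definition carrier_sa :: "real \<Rightarrow> vec set" where
  "carrier_sa s = {v. finite (supp v) \<and> (\<forall>b \<in> supp v. adm s b)}"

definition even_part :: "real \<Rightarrow> vec set" where
  "even_part s = {v \<in> carrier_sa s. \<forall>b \<in> supp v. is_even b}"

definition odd_part :: "real \<Rightarrow> vec set" where
  "odd_part s = {v \<in> carrier_sa s. \<forall>b \<in> supp v. \<not> is_even b}"

fun brb :: "complex \<Rightarrow> sb \<Rightarrow> sb \<Rightarrow> vec" where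
  "brb lam (L m) (L n) = scal (of_int (m - n)) (bas (L (m + n)))"
| "brb lam (L m) (I n) = scal (of_int (m - n)) (bas (I (m + n)))"
| "brb lam (I n) (L m) = scal (- of_int (m - n)) (bas (I (m + n)))"
| "brb lam (L m) (H n) = scal (of_int m / 2 - of_int n / 2) (bas (H (2 * m + n)))"
| "brb lam (H n) (L m) = scal (- (of_int m / 2 - of_int n / 2)) (bas (H (2 * m + n)))"
| "brb lam (L m) (G n) = scal (of_int m / 2 - of_int n / 2) (bas (G (2 * m + n)))
      + scal (lam * of_int (m + 1)) (bas (H (2 * m + n)))"
| "brb lam (G n) (L m) = - (scal (of_int m / 2 - of_int n / 2) (bas (G (2 * m + n)))
      + scal (lam * of_int (m + 1)) (bas (H (2 * m + n))))"
| "brb lam (I m) (G n) = scal (of_int (m - n)) (bas (H (2 * m + n)))"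
| "brb lam (G n) (I m) = scal (- of_int (m - n)) (bas (H (2 * m + n)))"
| "brb lam (G n) (G k) = bas (I ((n + k) div 2))"
| "brb lam _ _ = 0"

definition br :: "complex \<Rightarrow> vec \<Rightarrow> vec \<Rightarrow> vec" where
  "br lam x y = (\<lambda>c. \<Sum>a\<in>supp x. \<Sum>b\<in>supp y. x a * y b * brb lam a b c)"

definition is_aut :: "real \<Rightarrow> complex \<Rightarrow> (vec \<Rightarrow> vec) \<Rightarrow> bool" where
  "is_aut s lam \<sigma> \<longleftrightarrow>
     bij_betw \<sigma> (carrier_sa s) (carrier_sa s)
   \<and> (\<forall>x \<in> carrier_sa s. \<forall>y \<in> carrier_sa s. \<sigma> (x + y) = \<sigma> x + \<sigma> y)
   \<and> (\<forall>c. \<forall>x \<in> carrier_sa s. \<sigma> (scal c x) = scal c (\<sigma> x))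
   \<and> \<sigma> ` even_part s \<subseteq> even_part s
   \<and> \<sigma> ` odd_part s \<subseteq> odd_part s
   \<and> (\<forall>x \<in> carrier_sa s. \<forall>y \<in> carrier_sa s. \<sigma> (br lam x y) = br lam (\<sigma> x) (\<sigma> y))"

end

theory Submission
  imports Defs
begin

text \<open>Since \<sigma> maps each I_m to a multiple of I_{\<epsilon>m}, and a bracket with some I_m never has
  a G-component, \<sigma>(H_k) has no G-component: every H_k is a nonzero multiple of some [I_m, G_p].
  Now \<sigma>(L_0) = \<epsilon>L_0, so applying \<sigma> to [L_0, G_p] = -p G_p + \<lambda>H_p and comparing G_q-components
  gives -\<epsilon>q \<sigma>(G_p)(G_q) = -p \<sigma>(G_p)(G_q).\<close>

lemma module_scal: "module scal"
  by unfold_locales (auto simp: scal_def algebra_simps)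

lemma sum_apply: "finite A \<Longrightarrow> (sum f A :: vec) c = (\<Sum>a\<in>A. f a c)"
  by (induction A rule: finite_induct) auto

lemma supp_bas [simp]: "supp (bas b) = {b}"
  by (auto simp: supp_def bas_def)

lemma supp_scal_bas: "c \<noteq> 0 \<Longrightarrow> supp (scal c (bas b)) = {b}"
  by (auto simp: supp_def bas_def scal_def)

lemma br_bas: "br lam (bas a) (bas b) = brb lam a b"
  by (rule ext) (simp add: br_def, simp add: bas_def)

lemma carrier_scal_bas: "adm s b \<Longrightarrow> scal c (bas b) \<in> carrier_sa s"
proof -
  assume "adm s b"
  have "supp (scal c (bas b)) \<subseteq> {b}"
    by (auto simp: supp_def scal_def bas_def)
  then show ?thesis
    using \<open>adm s b\<close> finite_subset by (auto simp: carrier_sa_def)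
qed

lemma carrier_bas: "adm s b \<Longrightarrow> bas b \<in> carrier_sa s"
  by (auto simp: carrier_sa_def)

lemma bas_G_in_odd_part: "halfidx s n \<Longrightarrow> bas (G n) \<in> odd_part s"
  by (simp add: odd_part_def carrier_sa_def)

lemma in_span_bas:
  assumes "finite (supp v)" "supp v \<subseteq> S"
  shows "v \<in> module.span scal (bas ` S)"
proof -
  interpret module scal by (rule module_scal)
  have "v = (\<Sum>b\<in>supp v. scal (v b) (bas b))"
  proof (rule ext)
    fix c
    have "(\<Sum>b\<in>supp v. scal (v b) (bas b)) c = (\<Sum>b\<in>supp v. if b = c then v c else 0)"
      using assms(1) by (simp add: sum_apply scal_def bas_def if_distrib eq_commute cong: if_cong)
    also have "\<dots> = v c"
      using assms(1) by (auto simp: supp_def)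
    finally show "v c = (\<Sum>b\<in>supp v. scal (v b) (bas b)) c" by simp
  qed
  also have "\<dots> \<in> span (bas ` S)"
    using assms(2) by (intro span_sum span_scale span_base) auto
  finally show ?thesis .
qed

lemma odd_minus_G_component_in_span_H:
  assumes "v \<in> odd_part s" and "\<And>q. q \<noteq> r \<Longrightarrow> v (G q) = 0"
  shows "v - scal (v (G r)) (bas (G r)) \<in> module.span scal (bas ` {H q | q. halfidx s q})"
proof -
  define u where "u = v - scal (v (G r)) (bas (G r))"
  have supp_u: "supp u \<subseteq> supp v"
    by (auto simp: u_def supp_def scal_def bas_def split: if_splits)
  have "supp u \<subseteq> {H q | q. halfidx s q}"
  proof
    fix b assume b: "b \<in> supp u"
    then have "\<not> is_even b" "adm s b"
      using assms(1) supp_u by (auto simp: odd_part_def carrier_sa_def)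
    moreover have "b \<noteq> G q" for q
      using b assms(2)[of q] by (cases "q = r") (auto simp: u_def supp_def scal_def bas_def)
    ultimately show "b \<in> {H q | q. halfidx s q}"
      by (cases b) auto
  qed
  moreover have "finite (supp u)"
    using assms(1) supp_u finite_subset by (auto simp: odd_part_def carrier_sa_def)
  ultimately show ?thesis
    unfolding u_def by (intro in_span_bas)
qed

lemma br_G_component_eq_0_if_supp_I:
  assumes "supp x \<subseteq> range I"
  shows "br lam x y (G q) = 0"
proof -
  have "brb lam a b (G q) = 0" if "a \<in> range I" for a b
    using that by (cases b) (auto simp: scal_def bas_def)
  then show ?thesis
    using assms by (auto simp: br_def intro!: sum.neutral)
qed

lemma br_L0_G_component:
  assumes "finite (supp y)"
  shows "br lam (scal c (bas (L 0))) y (G q) = c * (- of_int q / 2) * y (G q)"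
proof (cases "c = 0")
  case True
  then show ?thesis
    by (simp add: br_def supp_def scal_def)
next
  case False
  have brb_L0: "brb lam (L 0) b (G q) = (if b = G q then - of_int q / 2 else 0)" for b
    by (cases b) (auto simp: scal_def bas_def)
  have "br lam (scal c (bas (L 0))) y (G q) = c * (\<Sum>b\<in>supp y. y b * brb lam (L 0) b (G q))"
    unfolding br_def supp_scal_bas[OF False] by (simp add: scal_def bas_def sum_distrib_left mult.assoc)
  also have "\<dots> = c * (\<Sum>b\<in>supp y. if b = G q then y (G q) * (- of_int q / 2) else 0)"
    unfolding brb_L0 by (auto intro!: sum.cong)
  also have "\<dots> = c * (- of_int q / 2) * y (G q)"
    using assms by (auto simp: supp_def)
  finally show ?thesis .
qed

lemma halfidx_add_even:
  assumes "halfidx s n"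
  shows "halfidx s (2 * m + n)"
proof -
  obtain j where "real_of_int n / 2 = s + real_of_int j"
    using assms unfolding halfidx_def by blast
  then have "real_of_int (2 * m + n) / 2 = s + real_of_int (m + j)"
    by (simp add: field_simps)
  then show ?thesis
    unfolding halfidx_def by blast
qed

text \<open>In doubled odd indices, H_k = [I_m, G_{k-2m}] / (3m - k), with m chosen so that 3m \<noteq> k.\<close>
lemma bas_H_eq_scal_br_I_G:
  assumes "halfidx s k"
  obtains m k' c where "halfidx s k'" "bas (H k) = scal c (br lam (bas (I m)) (bas (G k')))"
proof -
  define m :: int where "m = (if k = 0 then 1 else 0)"
  have ne: "(of_int (3 * m - k) :: complex) \<noteq> 0"
    by (auto simp: m_def)
  have "br lam (bas (I m)) (bas (G (k - 2 * m))) = scal (of_int (3 * m - k)) (bas (H k))"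
    by (simp add: br_bas algebra_simps)
  then have "bas (H k) = scal (1 / of_int (3 * m - k)) (br lam (bas (I m)) (bas (G (k - 2 * m))))"
    using ne by (simp add: scal_def fun_eq_iff)
  moreover have "halfidx s (k - 2 * m)"
    using halfidx_add_even[OF assms, of "- m"] by simp
  ultimately show thesis
    using that by blast
qed

lemma is_aut_add: "is_aut s lam \<sigma> \<Longrightarrow> x \<in> carrier_sa s \<Longrightarrow> y \<in> carrier_sa s \<Longrightarrow> \<sigma> (x + y) = \<sigma> x + \<sigma> y"
  by (simp add: is_aut_def)

lemma is_aut_scal: "is_aut s lam \<sigma> \<Longrightarrow> x \<in> carrier_sa s \<Longrightarrow> \<sigma> (scal c x) = scal c (\<sigma> x)"
  by (simp add: is_aut_def)

lemma is_aut_br: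
  "is_aut s lam \<sigma> \<Longrightarrow> x \<in> carrier_sa s \<Longrightarrow> y \<in> carrier_sa s \<Longrightarrow> \<sigma> (br lam x y) = br lam (\<sigma> x) (\<sigma> y)"
  by (simp add: is_aut_def)

lemma is_aut_odd_part: "is_aut s lam \<sigma> \<Longrightarrow> x \<in> odd_part s \<Longrightarrow> \<sigma> x \<in> odd_part s"
  unfolding is_aut_def by blast

lemma is_aut_H_G_component_eq_0:
  assumes aut: "is_aut s lam \<sigma>" and I_to_I: "\<And>m. supp (\<sigma> (bas (I m))) \<subseteq> range I"
    and "halfidx s k"
  shows "\<sigma> (bas (H k)) (G q) = 0"
proof -
  obtain m k' c where "halfidx s k'" and H_eq: "bas (H k) = scal c (br lam (bas (I m)) (bas (G k')))"
    using bas_H_eq_scal_br_I_G[OF \<open>halfidx s k\<close>] by blast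
  have "br lam (bas (I m)) (bas (G k')) \<in> carrier_sa s"
    using halfidx_add_even[OF \<open>halfidx s k'\<close>] by (simp add: br_bas carrier_scal_bas)
  then have "\<sigma> (bas (H k)) = scal c (br lam (\<sigma> (bas (I m))) (\<sigma> (bas (G k'))))"
    unfolding H_eq using \<open>halfidx s k'\<close>
    by (simp add: is_aut_scal[OF aut] is_aut_br[OF aut] carrier_bas)
  then show ?thesis
    using br_G_component_eq_0_if_supp_I[OF I_to_I] by (simp add: scal_def)
qed

lemma is_aut_G_component_eq_0:
  assumes aut: "is_aut s lam \<sigma>" and "halfidx s n"
    and L0: "\<sigma> (bas (L 0)) = scal (of_int e) (bas (L 0))"
    and H_no_G: "\<sigma> (bas (H n)) (G q) = 0"
    and "e * q \<noteq> n"
  shows "\<sigma> (bas (G n)) (G q) = 0"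
proof -
  define w where "w = \<sigma> (bas (G n))"
  have "w \<in> odd_part s"
    unfolding w_def using \<open>halfidx s n\<close> by (intro is_aut_odd_part[OF aut] bas_G_in_odd_part)
  then have fin: "finite (supp w)"
    by (simp add: odd_part_def carrier_sa_def)
  have "br lam (scal (of_int e) (bas (L 0))) w = \<sigma> (br lam (bas (L 0)) (bas (G n)))"
    unfolding w_def L0[symmetric] using \<open>halfidx s n\<close> by (simp add: is_aut_br[OF aut] carrier_bas)
  also have "br lam (bas (L 0)) (bas (G n)) = scal (- of_int n / 2) (bas (G n)) + scal lam (bas (H n))"
    by (simp add: br_bas)
  also have "\<sigma> \<dots> = scal (- of_int n / 2) w + scal lam (\<sigma> (bas (H n)))"
    unfolding w_def using \<open>halfidx s n\<close>
    by (simp add: is_aut_add[OF aut] is_aut_scal[OF aut] carrier_bas carrier_scal_bas)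
  finally have "br lam (scal (of_int e) (bas (L 0))) w = scal (- of_int n / 2) w + scal lam (\<sigma> (bas (H n)))" .
  from fun_cong[OF this, of "G q"]
  have "of_int e * (- of_int q / 2) * w (G q) = (- of_int n / 2) * w (G q)"
    unfolding br_L0_G_component[OF fin] using H_no_G by (simp add: scal_def)
  then have "(of_int (e * q) - of_int n) * w (G q) = (0 :: complex)"
    by (simp add: algebra_simps)
  then show ?thesis
    using \<open>e * q \<noteq> n\<close> unfolding w_def by (simp del: of_int_mult)
qed

theorem lemma3p5:
  fixes s :: real and lam :: complex and \<sigma> :: "vec \<Rightarrow> vec"
    and \<epsilon> :: int and \<alpha> \<mu> \<beta> :: complex
  assumes "s = 0 \<or> s = 1/2"
    and "is_aut s lam \<sigma>"
    and "\<epsilon> = 1 \<or> \<epsilon> = -1"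
    and "\<alpha> \<noteq> 0" and "\<mu> \<noteq> 0"
    and "\<And>m. \<sigma> (bas (L m)) = scal (of_int \<epsilon> * \<alpha> powi m) (bas (L (\<epsilon> * m)))
                              + scal (of_int m * \<alpha> powi m * \<beta>) (bas (I (\<epsilon> * m)))"
    and "\<And>m. \<sigma> (bas (I m)) = scal (\<alpha> powi m * \<mu>) (bas (I (\<epsilon> * m)))"
  shows "\<forall>n. halfidx s n \<longrightarrow>
           (\<exists>c. \<sigma> (bas (G n)) - scal c (bas (G (\<epsilon> * n)))
                  \<in> module.span scal (bas ` {H q | q. halfidx s q}))"
proof (intro allI impI)
  fix n assume "halfidx s n"
  have I_to_I: "supp (\<sigma> (bas (I m))) \<subseteq> range I" for m
    using assms(4,5,7) by (simp add: supp_scal_bas)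
  have L0: "\<sigma> (bas (L 0)) = scal (of_int \<epsilon>) (bas (L 0))"
    using assms(6)[of 0] by (auto simp: scal_def bas_def)
  have "\<sigma> (bas (G n)) (G q) = 0" if "q \<noteq> \<epsilon> * n" for q
    using assms(3) that
    by (intro is_aut_G_component_eq_0[OF assms(2) \<open>halfidx s n\<close> L0]
        is_aut_H_G_component_eq_0[OF assms(2) I_to_I \<open>halfidx s n\<close>]) auto
  moreover have "\<sigma> (bas (G n)) \<in> odd_part s"
    using \<open>halfidx s n\<close> by (intro is_aut_odd_part[OF assms(2)] bas_G_in_odd_part)
  ultimately show "\<exists>c. \<sigma> (bas (G n)) - scal c (bas (G (\<epsilon> * n)))
                      \<in> module.span scal (bas ` {H q | q. halfidx s q})"
    using odd_minus_G_component_in_span_H by blast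
qed

end
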